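(* Let $N=(V,E)$ be a rooted DAG, let $E_T$ and $E_N$ be its sets of tree arcs and network arcs, respectively, and let $N^*=(V,E^* )$ be the directed graph with $E^*=E\cup E_N^{-1}$, where $E_N^{-1}=\{(v,u)\mid (u,v)\in E_N\}$. The following are equivalent: (i) $N$ is strongly time consistent; (ii) $N^*$ has no cycle containing some tree arc of $N$; (iii) $N$ admits a temporal representation.
   Context: In a DAG, a tree node is a node of in-degree at most 1 and a hybrid node one of in-degree greater than 1; the root is the (unique) node of in-degree 0. A tree arc is an arc whose head is a tree node; a network arc is an arc whose head is a hybrid node. A path in a directed graph is a sequence of nodes $(v_0,\dots,v_k)$ with each $(v_{i-1},v_i)$ an arc; it is a cycle if $v_k=v_0$ (and $k\ge1$). $N$ is strongly time consistent if for any two nodes $x,y$ for which there exists a sequence of nodes $(v_0,\dots,v_k)$ with $v_0=x$, $v_k=y$, such that for every $i=0,\dots,k-1$ either $(v_i,v_{i+1})\in E$ or $(v_{i+1},v_i)$ is a network arc of $N$, and at least one pair $(v_i,v_{i+1})$ is a tree arc of $N$, the nodes $x$ and $y$ do not have a hybrid child in common. A temporal representation of $N$ is a map $\tau:V\to\mathbb{N}$ such that $\tau(r)=0$ for the root $r$, $\tau(u)<\tau(v)$ for every $(u,v)\in E_T$, and $\tau(u)=\tau(v)$ for every $(u,v)\in E_N$. *)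

theory Defs
  imports Main
begin

definition indeg :: "('a \<times> 'a) set \<Rightarrow> 'a \<Rightarrow> nat" where
  "indeg E v = card {u. (u, v) \<in> E}"

definition tree_node :: "('a \<times> 'a) set \<Rightarrow> 'a \<Rightarrow> bool" where
  "tree_node E v \<longleftrightarrow> indeg E v \<le> 1"

definition hybrid_node :: "('a \<times> 'a) set \<Rightarrow> 'a \<Rightarrow> bool" where
  "hybrid_node E v \<longleftrightarrow> indeg E v > 1"

definition tree_arcs :: "('a \<times> 'a) set \<Rightarrow> ('a \<times> 'a) set" where
  "tree_arcs E = {(u, v). (u, v) \<in> E \<and> tree_node E v}"

definition network_arcs :: "('a \<times> 'a) set \<Rightarrow> ('a \<times> 'a) set" where
  "network_arcs E = {(u, v). (u, v) \<in> E \<and> hybrid_node E v}"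

definition rooted_dag :: "'a set \<Rightarrow> ('a \<times> 'a) set \<Rightarrow> 'a \<Rightarrow> bool" where
  "rooted_dag V E r \<longleftrightarrow> finite V \<and> E \<subseteq> V \<times> V \<and> acyclic E \<and>
     r \<in> V \<and> indeg E r = 0 \<and> (\<forall>v \<in> V. indeg E v = 0 \<longrightarrow> v = r)"

definition Estar :: "('a \<times> 'a) set \<Rightarrow> ('a \<times> 'a) set" where
  "Estar E = E \<union> (network_arcs E)\<inverse>"

definition is_path :: "('a \<times> 'a) set \<Rightarrow> 'a list \<Rightarrow> bool" where
  "is_path A vs \<longleftrightarrow> vs \<noteq> [] \<and> (\<forall>i. Suc i < length vs \<longrightarrow> (vs ! i, vs ! Suc i) \<in> A)"

definition is_cycle :: "('a \<times> 'a) set \<Rightarrow> 'a list \<Rightarrow> bool" where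
  "is_cycle A vs \<longleftrightarrow> is_path A vs \<and> length vs \<ge> 2 \<and> last vs = hd vs"

definition contains_arc_of :: "('a \<times> 'a) set \<Rightarrow> 'a list \<Rightarrow> bool" where
  "contains_arc_of B vs \<longleftrightarrow> (\<exists>i. Suc i < length vs \<and> (vs ! i, vs ! Suc i) \<in> B)"

definition strongly_time_consistent :: "('a \<times> 'a) set \<Rightarrow> bool" where
  "strongly_time_consistent E \<longleftrightarrow>
     (\<forall>x y vs. is_path (Estar E) vs \<and> hd vs = x \<and> last vs = y \<and> contains_arc_of (tree_arcs E) vs
        \<longrightarrow> \<not> (\<exists>h. hybrid_node E h \<and> (x, h) \<in> E \<and> (y, h) \<in> E))"

definition temporal_representation :: "('a \<times> 'a) set \<Rightarrow> 'a \<Rightarrow> ('a \<Rightarrow> nat) \<Rightarrow> bool" where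
  "temporal_representation E r \<tau> \<longleftrightarrow> \<tau> r = 0 \<and>
     (\<forall>(u, v) \<in> tree_arcs E. \<tau> u < \<tau> v) \<and>
     (\<forall>(u, v) \<in> network_arcs E. \<tau> u = \<tau> v)"

end

theory Submission
  imports Defs
begin

text \<open>Along an arc of \<open>N*\<close> a temporal representation can only stay equal or grow, and it grows
strictly along a tree arc; hence it rules out cycles of \<open>N*\<close> through tree arcs. Conversely, if
there is no such cycle, the number of nodes from which \<open>v\<close> is reachable in \<open>N*\<close> through some
tree arc is a temporal representation. Two nodes with a common hybrid child \<open>h\<close> reach each other
in \<open>N*\<close> via \<open>h\<close>, which turns a violation of strong time consistency into such a cycle.
Conversely, since \<open>N\<close> is acyclic, such a cycle uses a reversed network arc \<open>(u, v)\<close>, and then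
the pair \<open>u, u\<close> with hybrid child \<open>v\<close> violates strong time consistency.\<close>

lemma is_path_iff_successively:
  "is_path A vs \<longleftrightarrow> vs \<noteq> [] \<and> successively (\<lambda>x y. (x, y) \<in> A) vs"
  by (simp add: is_path_def successively_conv_nth)

lemma contains_arc_of_iff_not_successively:
  "contains_arc_of B vs \<longleftrightarrow> \<not> successively (\<lambda>x y. (x, y) \<notin> B) vs"
  by (auto simp: contains_arc_of_def successively_conv_nth)

lemma is_path_singleton [simp]: "is_path A [x]"
  by (simp add: is_path_iff_successively)

lemma is_path_Cons_Cons [simp]:
  "is_path A (x # y # vs) \<longleftrightarrow> (x, y) \<in> A \<and> is_path A (y # vs)"
  by (simp add: is_path_iff_successively)

lemma not_contains_arc_of_singleton [simp]: "\<not> contains_arc_of B [x]"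
  by (simp add: contains_arc_of_iff_not_successively)

lemma contains_arc_of_Cons_Cons [simp]:
  "contains_arc_of B (x # y # vs) \<longleftrightarrow> (x, y) \<in> B \<or> contains_arc_of B (y # vs)"
  by (simp add: contains_arc_of_iff_not_successively)

lemma path_imp_rtrancl: "is_path A (x # vs) \<Longrightarrow> (x, last (x # vs)) \<in> A\<^sup>*"
proof (induction vs arbitrary: x)
  case (Cons y vs)
  then have "(x, last (y # vs)) \<in> A\<^sup>*"
    by (auto intro: converse_rtrancl_into_rtrancl)
  then show ?case by simp
qed simp

lemma path_through_arc_imp_rtrancl:
  "is_path A (x # vs) \<Longrightarrow> contains_arc_of B (x # vs) \<Longrightarrow> (x, last (x # vs)) \<in> A\<^sup>* O B O A\<^sup>*"
proof (induction vs arbitrary: x)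
  case (Cons y vs)
  then have "(x, y) \<in> A" "is_path A (y # vs)" by simp_all
  have "(x, last (y # vs)) \<in> A\<^sup>* O B O A\<^sup>*"
  proof (cases "(x, y) \<in> B")
    case True
    with path_imp_rtrancl[OF \<open>is_path A (y # vs)\<close>] show ?thesis by blast
  next
    case False
    with Cons have "(y, last (y # vs)) \<in> A\<^sup>* O B O A\<^sup>*" by simp
    with \<open>(x, y) \<in> A\<close> show ?thesis by (blast intro: converse_rtrancl_into_rtrancl)
  qed
  then show ?case by simp
qed simp

lemma rtrancl_imp_path: "(x, y) \<in> A\<^sup>* \<Longrightarrow> \<exists>vs. is_path A (x # vs) \<and> last (x # vs) = y"
proof (induction rule: converse_rtrancl_induct)
  case base
  show ?case by (rule exI[of _ "[]"]) simp
next
  case (step x z)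
  then obtain vs where "is_path A (z # vs)" "last (z # vs) = y" by blast
  with step show ?case by (intro exI[of _ "z # vs"]) simp
qed

lemma rtrancl_through_arc_imp_path:
  assumes "(x, a) \<in> A\<^sup>*" "(a, b) \<in> B" "(b, y) \<in> A\<^sup>*" "B \<subseteq> A"
  shows "\<exists>vs. is_path A (x # vs) \<and> last (x # vs) = y \<and> contains_arc_of B (x # vs)"
  using assms(1)
proof (induction rule: converse_rtrancl_induct)
  case base
  obtain vs where "is_path A (b # vs)" "last (b # vs) = y"
    using rtrancl_imp_path[OF assms(3)] by blast
  with assms(2,4) show ?case by (intro exI[of _ "b # vs"]) auto
next
  case (step x z)
  then obtain vs where "is_path A (z # vs)" "last (z # vs) = y" "contains_arc_of B (z # vs)"
    by blast
  with step show ?case by (intro exI[of _ "z # vs"]) simp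
qed

lemma path_through_arc_iff:
  assumes "B \<subseteq> A"
  shows "(\<exists>vs. is_path A vs \<and> hd vs = x \<and> last vs = y \<and> contains_arc_of B vs)
    \<longleftrightarrow> (x, y) \<in> A\<^sup>* O B O A\<^sup>*"
proof
  assume "\<exists>vs. is_path A vs \<and> hd vs = x \<and> last vs = y \<and> contains_arc_of B vs"
  then obtain vs where vs: "is_path A vs" "hd vs = x" "last vs = y" "contains_arc_of B vs"
    by blast
  then obtain ws where "vs = x # ws"
    by (cases vs) (auto simp: is_path_def)
  with vs path_through_arc_imp_rtrancl[of A x ws B] show "(x, y) \<in> A\<^sup>* O B O A\<^sup>*"
    by simp
next
  assume "(x, y) \<in> A\<^sup>* O B O A\<^sup>*"
  then obtain a b where "(x, a) \<in> A\<^sup>*" "(a, b) \<in> B" "(b, y) \<in> A\<^sup>*"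
    by blast
  from rtrancl_through_arc_imp_path[OF this assms] obtain vs
    where "is_path A (x # vs)" "last (x # vs) = y" "contains_arc_of B (x # vs)"
    by blast
  then show "\<exists>vs. is_path A vs \<and> hd vs = x \<and> last vs = y \<and> contains_arc_of B vs"
    by (intro exI[of _ "x # vs"]) simp
qed

lemma cycle_through_arc_iff:
  assumes "B \<subseteq> A"
  shows "(\<exists>vs. is_cycle A vs \<and> contains_arc_of B vs) \<longleftrightarrow> (\<exists>(a, b) \<in> B. (b, a) \<in> A\<^sup>*)"
proof -
  have "is_cycle A vs \<and> contains_arc_of B vs
      \<longleftrightarrow> is_path A vs \<and> last vs = hd vs \<and> contains_arc_of B vs" for vs
    by (auto simp: is_cycle_def contains_arc_of_def)
  then have "(\<exists>vs. is_cycle A vs \<and> contains_arc_of B vs)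
      \<longleftrightarrow> (\<exists>x vs. is_path A vs \<and> hd vs = x \<and> last vs = x \<and> contains_arc_of B vs)"
    by auto
  also have "\<dots> \<longleftrightarrow> (\<exists>x. (x, x) \<in> A\<^sup>* O B O A\<^sup>*)"
    using path_through_arc_iff[OF assms] by blast
  also have "\<dots> \<longleftrightarrow> (\<exists>(a, b) \<in> B. (b, a) \<in> A\<^sup>*)"
    by (blast intro: rtrancl_trans)
  finally show ?thesis .
qed

lemma rtrancl_Un_cases:
  "(x, y) \<in> (A \<union> B)\<^sup>* \<Longrightarrow> (x, y) \<in> A\<^sup>* \<or> (x, y) \<in> (A \<union> B)\<^sup>* O B O (A \<union> B)\<^sup>*"
proof (induction rule: rtrancl_induct)
  case (step y z)
  then show ?case by (blast intro: rtrancl_into_rtrancl in_rtrancl_UnI)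
qed simp

lemma rank_monotone_imp_no_cycle_through_arc:
  assumes "\<forall>(u, v) \<in> R. \<tau> u \<le> \<tau> v" "\<forall>(u, v) \<in> T. \<tau> u < (\<tau> v :: 'b :: linorder)"
  shows "\<not> (\<exists>(a, b) \<in> T. (b, a) \<in> R\<^sup>*)"
proof -
  have "(x, y) \<in> R\<^sup>* \<Longrightarrow> \<tau> x \<le> \<tau> y" for x y
    by (induction rule: rtrancl_induct) (use assms(1) order_trans in fastforce)+
  with assms(2) show ?thesis by (fastforce simp: not_le)
qed

lemma exists_rank_if_no_cycle_through_arc:
  assumes "finite V" and "R \<subseteq> V \<times> V" and "T \<subseteq> R"
    and reach: "\<forall>v \<in> V. (x\<^sub>0, v) \<in> R\<^sup>*"
    and no_cycle: "\<not> (\<exists>(a, b) \<in> T. (b, a) \<in> R\<^sup>*)"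
  shows "\<exists>\<tau> :: 'a \<Rightarrow> nat. \<tau> x\<^sub>0 = 0 \<and> (\<forall>(u, v) \<in> R. \<tau> u \<le> \<tau> v) \<and> (\<forall>(u, v) \<in> T. \<tau> u < \<tau> v)"
proof -
  define S where "S = R\<^sup>* O T O R\<^sup>*"
  define \<tau> where "\<tau> v = card {u \<in> V. (u, v) \<in> S}" for v
  have irrefl: "(x, x) \<notin> S" for x
    using no_cycle unfolding S_def by (blast intro: rtrancl_trans)
  have S_step: "(x, y) \<in> S \<Longrightarrow> (y, z) \<in> R \<Longrightarrow> (x, z) \<in> S" for x y z
    unfolding S_def by (blast intro: rtrancl_into_rtrancl)
  have "{u \<in> V. (u, x\<^sub>0) \<in> S} = {}"
    using reach irrefl unfolding S_def by (blast intro: rtrancl_trans)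
  then have "\<tau> x\<^sub>0 = 0"
    unfolding \<tau>_def by (metis card.empty)
  moreover have "\<tau> u \<le> \<tau> v" if "(u, v) \<in> R" for u v
    unfolding \<tau>_def using \<open>finite V\<close> S_step[OF _ that] by (intro card_mono) auto
  moreover have "\<tau> u < \<tau> v" if "(u, v) \<in> T" for u v
  proof -
    have "u \<in> V" "(u, v) \<in> S" "(u, v) \<in> R"
      using that assms(2,3) unfolding S_def by auto
    then have "{w \<in> V. (w, u) \<in> S} \<subset> {w \<in> V. (w, v) \<in> S}"
      using S_step irrefl by blast
    then show ?thesis
      unfolding \<tau>_def using \<open>finite V\<close> by (simp add: psubset_card_mono)
  qed
  ultimately show ?thesis by blast
qed

lemma tree_arcs_subset: "tree_arcs E \<subseteq> E"
  by (auto simp: tree_arcs_def)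

lemma network_arcs_subset: "network_arcs E \<subseteq> E"
  by (auto simp: network_arcs_def)

lemma tree_arc_or_network_arc:
  "(u, v) \<in> E \<Longrightarrow> (u, v) \<in> tree_arcs E \<or> (u, v) \<in> network_arcs E"
  by (auto simp: tree_arcs_def network_arcs_def tree_node_def hybrid_node_def)

lemma subset_Estar: "E \<subseteq> Estar E"
  by (simp add: Estar_def)

lemma tree_arcs_subset_Estar: "tree_arcs E \<subseteq> Estar E"
  using tree_arcs_subset subset_Estar by blast

lemma Estar_subset: "E \<subseteq> V \<times> V \<Longrightarrow> Estar E \<subseteq> V \<times> V"
  using network_arcs_subset by (fastforce simp: Estar_def)

lemma temporal_representation_iff_monotone:
  "temporal_representation E r \<tau> \<longleftrightarrow>
     \<tau> r = 0 \<and> (\<forall>(u, v) \<in> Estar E. \<tau> u \<le> \<tau> v) \<and> (\<forall>(u, v) \<in> tree_arcs E. \<tau> u < \<tau> v)"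
  (is "?lhs \<longleftrightarrow> ?rhs")
proof
  assume ?lhs
  then have "\<tau> u \<le> \<tau> v" if "(u, v) \<in> Estar E" for u v
    using that tree_arc_or_network_arc[of u v E]
    unfolding temporal_representation_def Estar_def by fastforce
  with \<open>?lhs\<close> show ?rhs
    unfolding temporal_representation_def by blast
next
  assume ?rhs
  then have "\<tau> u = \<tau> v" if "(u, v) \<in> network_arcs E" for u v
    using that network_arcs_subset unfolding Estar_def by (fastforce intro: antisym)
  with \<open>?rhs\<close> show ?lhs
    unfolding temporal_representation_def by blast
qed

lemma strongly_time_consistent_iff_rtrancl:
  "strongly_time_consistent E \<longleftrightarrow>
     \<not> (\<exists>x y h. (x, y) \<in> (Estar E)\<^sup>* O tree_arcs E O (Estar E)\<^sup>* \<and>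
                hybrid_node E h \<and> (x, h) \<in> E \<and> (y, h) \<in> E)"
  unfolding strongly_time_consistent_def
  by (auto simp: path_through_arc_iff[OF tree_arcs_subset_Estar, symmetric])

lemma strongly_time_consistent_iff_no_cycle:
  assumes "acyclic E"
  shows "strongly_time_consistent E \<longleftrightarrow> \<not> (\<exists>(a, b) \<in> tree_arcs E. (b, a) \<in> (Estar E)\<^sup>*)"
proof -
  let ?R = "Estar E" and ?T = "tree_arcs E" and ?N = "network_arcs E"
  have "(\<exists>x y h. (x, y) \<in> ?R\<^sup>* O ?T O ?R\<^sup>* \<and> hybrid_node E h \<and> (x, h) \<in> E \<and> (y, h) \<in> E)
      \<longleftrightarrow> (\<exists>(a, b) \<in> ?T. (b, a) \<in> ?R\<^sup>*)"
  proof
    assume "\<exists>x y h. (x, y) \<in> ?R\<^sup>* O ?T O ?R\<^sup>* \<and> hybrid_node E h \<and> (x, h) \<in> E \<and> (y, h) \<in> E"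
    then obtain x y h a b where "(x, a) \<in> ?R\<^sup>*" "(a, b) \<in> ?T" "(b, y) \<in> ?R\<^sup>*"
      and h: "hybrid_node E h" "(x, h) \<in> E" "(y, h) \<in> E"
      by blast
    moreover have "(y, h) \<in> ?R" "(h, x) \<in> ?R"
      using h subset_Estar by (auto simp: Estar_def network_arcs_def)
    ultimately have "(b, a) \<in> ?R\<^sup>*"
      by (meson rtrancl_into_rtrancl rtrancl_trans)
    with \<open>(a, b) \<in> ?T\<close> show "\<exists>(a, b) \<in> ?T. (b, a) \<in> ?R\<^sup>*"
      by blast
  next
    assume "\<exists>(a, b) \<in> ?T. (b, a) \<in> ?R\<^sup>*"
    then obtain a b where ab: "(a, b) \<in> ?T" "(b, a) \<in> ?R\<^sup>*"
      by blast
    have "(b, a) \<notin> E\<^sup>*"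
      using ab(1) tree_arcs_subset assms unfolding acyclic_def by (meson rtrancl_into_trancl2 subsetD)
    with rtrancl_Un_cases[of b a E "?N\<inverse>"] ab(2) have "(b, a) \<in> ?R\<^sup>* O ?N\<inverse> O ?R\<^sup>*"
      by (simp add: Estar_def)
    then obtain u v where "(b, v) \<in> ?R\<^sup>*" "(u, v) \<in> ?N" "(u, a) \<in> ?R\<^sup>*"
      by blast
    moreover from \<open>(u, v) \<in> ?N\<close> have "(v, u) \<in> ?R" "hybrid_node E v" "(u, v) \<in> E"
      by (simp_all add: Estar_def network_arcs_def)
    ultimately have "(u, u) \<in> ?R\<^sup>* O ?T O ?R\<^sup>*"
      using ab(1) by (meson relcompI rtrancl_into_rtrancl)
    with \<open>hybrid_node E v\<close> \<open>(u, v) \<in> E\<close>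
    show "\<exists>x y h. (x, y) \<in> ?R\<^sup>* O ?T O ?R\<^sup>* \<and> hybrid_node E h \<and> (x, h) \<in> E \<and> (y, h) \<in> E"
      by blast
  qed
  then show ?thesis
    unfolding strongly_time_consistent_iff_rtrancl by (rule arg_cong[of _ _ Not])
qed

lemma rooted_dag_reachable_from_root:
  assumes "rooted_dag V E r" "v \<in> V"
  shows "(r, v) \<in> E\<^sup>*"
proof -
  have "finite V" "E \<subseteq> V \<times> V" "acyclic E" and root: "\<forall>v \<in> V. indeg E v = 0 \<longrightarrow> v = r"
    using assms(1) by (auto simp: rooted_dag_def)
  then have "wf E"
    by (meson finite_acyclic_wf finite_SigmaI finite_subset)
  then show ?thesis
    using assms(2)
  proof (induction v rule: wf_induct_rule)
    case (less v)
    show ?case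
    proof (cases "indeg E v = 0")
      case True
      with root less.prems show ?thesis by simp
    next
      case False
      then have "{u. (u, v) \<in> E} \<noteq> {}"
        unfolding indeg_def by (metis card.empty)
      then obtain u where "(u, v) \<in> E"
        by blast
      with less \<open>E \<subseteq> V \<times> V\<close> show ?thesis
        by (blast intro: rtrancl_into_rtrancl)
    qed
  qed
qed

lemma exists_temporal_representation_iff_no_cycle:
  assumes "rooted_dag V E r"
  shows "(\<exists>\<tau>. temporal_representation E r \<tau>) \<longleftrightarrow> \<not> (\<exists>(a, b) \<in> tree_arcs E. (b, a) \<in> (Estar E)\<^sup>*)"
proof
  assume "\<exists>\<tau>. temporal_representation E r \<tau>"
  then obtain \<tau> :: "'a \<Rightarrow> nat"
    where "\<forall>(u, v) \<in> Estar E. \<tau> u \<le> \<tau> v" "\<forall>(u, v) \<in> tree_arcs E. \<tau> u < \<tau> v"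
    unfolding temporal_representation_iff_monotone by blast
  then show "\<not> (\<exists>(a, b) \<in> tree_arcs E. (b, a) \<in> (Estar E)\<^sup>*)"
    by (rule rank_monotone_imp_no_cycle_through_arc)
next
  assume no_cycle: "\<not> (\<exists>(a, b) \<in> tree_arcs E. (b, a) \<in> (Estar E)\<^sup>*)"
  have "finite V" "E \<subseteq> V \<times> V"
    using assms by (auto simp: rooted_dag_def)
  moreover have "\<forall>v \<in> V. (r, v) \<in> (Estar E)\<^sup>*"
    using rooted_dag_reachable_from_root[OF assms] rtrancl_mono[OF subset_Estar] by blast
  ultimately show "\<exists>\<tau>. temporal_representation E r \<tau>"
    using exists_rank_if_no_cycle_through_arc[OF _ Estar_subset tree_arcs_subset_Estar _ no_cycle]
    by (simp add: temporal_representation_iff_monotone)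
qed

theorem proposition1:
  assumes "rooted_dag V E r"
  shows "(strongly_time_consistent E
            \<longleftrightarrow> \<not> (\<exists>vs. is_cycle (Estar E) vs \<and> contains_arc_of (tree_arcs E) vs))
       \<and> (\<not> (\<exists>vs. is_cycle (Estar E) vs \<and> contains_arc_of (tree_arcs E) vs)
            \<longleftrightarrow> (\<exists>\<tau>. temporal_representation E r \<tau>))"
proof -
  have "acyclic E"
    using assms by (simp add: rooted_dag_def)
  then have "strongly_time_consistent E \<longleftrightarrow> \<not> (\<exists>(a, b) \<in> tree_arcs E. (b, a) \<in> (Estar E)\<^sup>*)"
    by (rule strongly_time_consistent_iff_no_cycle)
  moreover have "(\<exists>vs. is_cycle (Estar E) vs \<and> contains_arc_of (tree_arcs E) vs)
      \<longleftrightarrow> (\<exists>(a, b) \<in> tree_arcs E. (b, a) \<in> (Estar E)\<^sup>*)"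
    by (rule cycle_through_arc_iff[OF tree_arcs_subset_Estar])
  moreover note exists_temporal_representation_iff_no_cycle[OF assms]
  ultimately show ?thesis
    by simp
qed

end
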